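(* Let $R$ be a ring with identity and involution $*$, and let $a,b\in R$ be dual core invertible with dual core inverses $a_{\oplus}$ and $b_{\oplus}$. If $ab=0=ba$ and $ab^*=0$, then $a+b$ is dual core invertible and $(a+b)_{\oplus}=a_{\oplus}+b_{\oplus}$.
   Context: An involution on $R$ satisfies $(a^* )^*=a$, $(ab)^*=b^*a^*$, $(a+b)^*=a^*+b^*$. An element $x\in R$ is a dual core inverse of $a$ if $axa=a$, $xR=a^*R$ and $Rx=Ra$; it is unique when it exists and is denoted $a_{\oplus}$. *)

theory Defs
  imports Main
begin

definition involution :: "('a::ring_1 \<Rightarrow> 'a) \<Rightarrow> bool" where
  "involution star \<longleftrightarrow> (\<forall>a. star (star a) = a) \<and> (\<forall>a b. star (a * b) = star b * star a)
     \<and> (\<forall>a b. star (a + b) = star a + star b)"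

definition right_ideal_gen :: "'a::ring_1 \<Rightarrow> 'a set" where
  "right_ideal_gen x = {x * r | r. True}"

definition left_ideal_gen :: "'a::ring_1 \<Rightarrow> 'a set" where
  "left_ideal_gen x = {r * x | r. True}"

definition is_dual_core_inverse :: "('a::ring_1 \<Rightarrow> 'a) \<Rightarrow> 'a \<Rightarrow> 'a \<Rightarrow> bool" where
  "is_dual_core_inverse star a x \<longleftrightarrow> a * x * a = a
     \<and> right_ideal_gen x = right_ideal_gen (star a) \<and> left_ideal_gen x = left_ideal_gen a"

definition dual_core_invertible :: "('a::ring_1 \<Rightarrow> 'a) \<Rightarrow> 'a \<Rightarrow> bool" where
  "dual_core_invertible star a \<longleftrightarrow> (\<exists>x. is_dual_core_inverse star a x)"

definition dual_core_inv :: "('a::ring_1 \<Rightarrow> 'a) \<Rightarrow> 'a \<Rightarrow> 'a" where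
  "dual_core_inv star a = (THE x. is_dual_core_inverse star a x)"

end

theory Submission
  imports Defs
begin

text \<open>A dual core inverse x of a is characterised by the five equations a x a = a, x a x = x,
  (x a)* = x a, x x a = x and a a x = a; the ideal conditions are recovered from
  x = a* (x* x), a* = x (a a*), x = (x x) a and a = (a a) x. If a and b are orthogonal in the sense
  of the hypotheses, then so are their dual core inverses x and y, in the sense that every
  mixed product of a, b, x, y vanishes. All five equations for a + b and x + y then split
  into the corresponding equations for a, x and for b, y.\<close>

lemma mem_right_ideal_gen_self: "x \<in> right_ideal_gen (x::'a::ring_1)"
  unfolding right_ideal_gen_def by (metis (mono_tags) mem_Collect_eq mult_1_right)

lemma mem_left_ideal_gen_self: "x \<in> left_ideal_gen (x::'a::ring_1)"
  unfolding left_ideal_gen_def by (metis (mono_tags) mem_Collect_eq mult_1_left)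

lemma right_ideal_gen_eqI:
  fixes x p :: "'a::ring_1"
  assumes "x = p * r" and "p = x * s"
  shows "right_ideal_gen x = right_ideal_gen p"
  unfolding right_ideal_gen_def using assms by (metis mult.assoc)

lemma left_ideal_gen_eqI:
  fixes x p :: "'a::ring_1"
  assumes "x = r * p" and "p = s * x"
  shows "left_ideal_gen x = left_ideal_gen p"
  unfolding left_ideal_gen_def using assms by (metis mult.assoc)

locale ring_with_involution =
  fixes star :: "'a::ring_1 \<Rightarrow> 'a"
  assumes involution: "involution star"
begin

lemma star_star [simp]: "star (star p) = p"
  using involution unfolding involution_def by blast

lemma star_mult: "star (p * q) = star q * star p"
  using involution unfolding involution_def by blast

lemma star_add: "star (p + q) = star p + star q"
  using involution unfolding involution_def by blast

lemma star_zero [simp]: "star 0 = 0"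
  using star_add[of 0 0] by simp

lemma dual_core_inverse_eqs:
  assumes "is_dual_core_inverse star a x"
  shows "a * x * a = a" "x * a * x = x" "star (x * a) = x * a" "x * x * a = x" "a * a * x = a"
proof -
  have axa: "a * x * a = a" and R: "right_ideal_gen x = right_ideal_gen (star a)"
    and L: "left_ideal_gen x = left_ideal_gen a"
    using assms unfolding is_dual_core_inverse_def by auto
  have "x \<in> right_ideal_gen (star a)"
    using mem_right_ideal_gen_self R by blast
  then obtain u where u: "x = star a * u" unfolding right_ideal_gen_def by blast
  have "x \<in> left_ideal_gen a"
    using mem_left_ideal_gen_self L by blast
  then obtain w where w: "x = w * a" unfolding left_ideal_gen_def by blast
  have "a \<in> left_ideal_gen x"
    using mem_left_ideal_gen_self L by blast
  then obtain z where z: "a = z * x" unfolding left_ideal_gen_def by blast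
  have "star a = star a * star x * star a"
    using arg_cong[OF axa, of star] by (simp add: star_mult mult.assoc)
  then have x_eq: "x = star a * star x * x"
    using u by (metis mult.assoc)
  have xxa: "x * x * a = x"
    using w axa by (metis mult.assoc)
  have xa: "x * a = star (x * a) * (x * a)"
    using x_eq by (metis mult.assoc star_mult)
  then have herm: "star (x * a) = x * a"
    by (metis star_mult star_star)
  have xax: "x * a * x = x"
    using x_eq herm by (metis star_mult)
  have "a * a * x = a"
    using z xax by (metis mult.assoc)
  with axa xax herm xxa show "a * x * a = a" "x * a * x = x" "star (x * a) = x * a"
    "x * x * a = x" "a * a * x = a" by blast+
qed

lemma is_dual_core_inverse_iff:
  "is_dual_core_inverse star a x \<longleftrightarrow>
     a * x * a = a \<and> x * a * x = x \<and> star (x * a) = x * a \<and> x * x * a = x \<and> a * a * x = a"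
proof
  assume "is_dual_core_inverse star a x"
  then show "a * x * a = a \<and> x * a * x = x \<and> star (x * a) = x * a \<and> x * x * a = x \<and> a * a * x = a"
    using dual_core_inverse_eqs by blast
next
  assume h: "a * x * a = a \<and> x * a * x = x \<and> star (x * a) = x * a \<and> x * x * a = x \<and> a * a * x = a"
  then have x_in: "x = star a * (star x * x)" and sa_in: "star a = x * (a * star a)"
    by (metis mult.assoc star_mult)+
  have "right_ideal_gen x = right_ideal_gen (star a)"
    using right_ideal_gen_eqI[OF x_in sa_in] .
  moreover have "left_ideal_gen x = left_ideal_gen a"
    using h by (intro left_ideal_gen_eqI[of x "x * x" a "a * a"]) simp_all
  ultimately show "is_dual_core_inverse star a x"
    using h unfolding is_dual_core_inverse_def by blast
qed

lemma dual_core_inverse_unique: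
  assumes "is_dual_core_inverse star a x" and "is_dual_core_inverse star a y"
  shows "x = y"
proof -
  note x = dual_core_inverse_eqs[OF assms(1)] and y = dual_core_inverse_eqs[OF assms(2)]
  have "x * a = star (x * (a * y * a))"
    using x(3) y(1) by simp
  also have "\<dots> = y * a"
    using x(1,3) y(3) by (simp add: star_mult mult.assoc)
  finally have xa_ya: "x * a = y * a" .
  have "x = x * a * y"
    using x(4) y(5) by (metis mult.assoc)
  then show ?thesis
    using xa_ya y(2) by simp
qed

lemma dual_core_inv_eqI:
  assumes "is_dual_core_inverse star a x"
  shows "dual_core_inv star a = x"
  unfolding dual_core_inv_def
  using assms dual_core_inverse_unique by blast

lemma dual_core_inverse_mult_eq_zero:
  assumes "is_dual_core_inverse star a x" and "a * c = 0"
  shows "x * c = 0"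
proof -
  have "x * c = x * x * (a * c)"
    using dual_core_inverse_eqs(4)[OF assms(1)] by (metis mult.assoc)
  with assms(2) show ?thesis by simp
qed

lemma mult_dual_core_inverse_eq_zero:
  assumes "is_dual_core_inverse star a x" and "c * star a = 0"
  shows "c * x = 0"
proof -
  have "x = star (x * a) * x"
    using dual_core_inverse_eqs(2,3)[OF assms(1)] by simp
  then have "c * x = c * star a * (star x * x)"
    by (metis mult.assoc star_mult)
  with assms(2) show ?thesis by simp
qed

lemma dual_core_inverse_add:
  assumes x: "is_dual_core_inverse star a x" and y: "is_dual_core_inverse star b y"
    and ab: "a * b = 0" and ba: "b * a = 0" and ab': "a * star b = 0"
  shows "is_dual_core_inverse star (a + b) (x + y)"
proof -
  have "b * star a = star (a * star b)"
    by (simp add: star_mult)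
  with ab' have ba': "b * star a = 0" by simp
  have xb: "x * b = 0" using dual_core_inverse_mult_eq_zero[OF x ab] .
  have ya: "y * a = 0" using dual_core_inverse_mult_eq_zero[OF y ba] .
  have bx: "b * x = 0" using mult_dual_core_inverse_eq_zero[OF x ba'] .
  have ay: "a * y = 0" using mult_dual_core_inverse_eq_zero[OF y ab'] .
  have xy: "x * y = 0"
    using dual_core_inverse_eqs(4)[OF x] ay by (metis mult.assoc mult_zero_right)
  have yx: "y * x = 0"
    using dual_core_inverse_eqs(4)[OF y] bx by (metis mult.assoc mult_zero_right)
  note ex = dual_core_inverse_eqs[OF x, unfolded mult.assoc]
    and ey = dual_core_inverse_eqs[OF y, unfolded mult.assoc]
  note zeros = ab ba xb ya bx ay xy yx
  have "(x + y) * (a + b) = x * a + y * b"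
    using zeros by (simp add: algebra_simps)
  then show ?thesis
    unfolding is_dual_core_inverse_iff
    using ex ey zeros by (simp add: algebra_simps star_add)
qed

end

theorem corollary4p9:
  fixes star :: "'a::ring_1 \<Rightarrow> 'a" and a b :: 'a
  assumes "involution star"
    and "dual_core_invertible star a" and "dual_core_invertible star b"
    and "a * b = 0" and "b * a = 0" and "a * star b = 0"
  shows "dual_core_invertible star (a + b)
    \<and> dual_core_inv star (a + b) = dual_core_inv star a + dual_core_inv star b"
proof -
  interpret ring_with_involution star by standard (rule assms(1))
  obtain x where x: "is_dual_core_inverse star a x"
    using assms(2) unfolding dual_core_invertible_def by blast
  obtain y where y: "is_dual_core_inverse star b y"
    using assms(3) unfolding dual_core_invertible_def by blast
  have sum: "is_dual_core_inverse star (a + b) (x + y)"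
    using dual_core_inverse_add[OF x y assms(4-6)] .
  then show ?thesis
    unfolding dual_core_invertible_def
    using dual_core_inv_eqI[OF sum] dual_core_inv_eqI[OF x] dual_core_inv_eqI[OF y] by blast
qed

end
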